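(* For all subsets $X_i, X_j \subseteq A$ the following hold: 1. $X_i \leadsto X_j$ if and only if for every $S' \subseteq S$: $\Psi_{X_i \cup X_j}(S') \subseteq \Psi_{X_i}(\Omega_{X_i \cup X_j}(S'))$; 2. $X_i \leadsto X_j$ if and only if for every $S' \subseteq S$: $\Psi_{X_i \cup X_j}(S') = \Psi_{X_i}(\Psi_{X_i \cup X_j}(S'))$.
   Context: Let $A$ be a finite set of agents. For each $a \in A$ let $S_a$ be a nonempty finite set, and let $S = \prod_{a \in A} S_a$ be the set of states. For each $a \in A$ let $\to_a \subseteq S \times S$ be a relation that is either empty or left-total (every state has at least one $\to_a$-successor), such that whenever $s \to_a s'$, either $s = s'$ or $s$ and $s'$ differ only in the $a$-component. For $X \subseteq A$ let $\to_X = \bigcup_{a \in X} \to_a$ (so $\to_\emptyset$ is empty) and let $\to_X^*$ be its reflexive-transitive closure. For $T \subseteq S$ write $(T \to_X) = \{ t' : \exists t \in T,\ t \to_X t'\}$. Orbit operator: $\Omega_X(S') = \{ s' : \exists s \in S',\ s \to_X^* s'\}$. Equilibria operator: $\Psi_X(S') = \{ s \in \Omega_X(S') : \forall s' \in S,\ s \to_X^* s' \implies s' \to_X^* s \}$. The modularity relation ($M$-relation) on subsets of $A$ is defined by: $X_i \leadsto X_j$ iff for every $S' \subseteq S$, letting $T = \Psi_{X_i}(\Psi_{X_i \cup X_j}(S'))$, one has $(T \to_{X_j}) \subseteq T$. *)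

theory Defs
  imports "HOL-Library.FuncSet"
begin

text \<open>States are functions from agents to local values; the state space is
  S = PiE A Sa. The agent relations are given by step :: agent => state relation.\<close>

definition stepX :: "('a \<Rightarrow> (('a \<Rightarrow> 'b) \<times> ('a \<Rightarrow> 'b)) set) \<Rightarrow> 'a set \<Rightarrow> (('a \<Rightarrow> 'b) \<times> ('a \<Rightarrow> 'b)) set" where
  "stepX step X = (\<Union>a\<in>X. step a)"

definition Omega :: "('a \<Rightarrow> (('a \<Rightarrow> 'b) \<times> ('a \<Rightarrow> 'b)) set) \<Rightarrow> 'a set \<Rightarrow> ('a \<Rightarrow> 'b) set \<Rightarrow> ('a \<Rightarrow> 'b) set" where
  "Omega step X S' = {s'. \<exists>s\<in>S'. (s, s') \<in> (stepX step X)\<^sup>*}"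

definition Psi :: "('a \<Rightarrow> (('a \<Rightarrow> 'b) \<times> ('a \<Rightarrow> 'b)) set) \<Rightarrow> ('a \<Rightarrow> 'b) set \<Rightarrow> 'a set \<Rightarrow> ('a \<Rightarrow> 'b) set \<Rightarrow> ('a \<Rightarrow> 'b) set" where
  "Psi step S X S' = {s \<in> Omega step X S'. \<forall>s'\<in>S. (s, s') \<in> (stepX step X)\<^sup>* \<longrightarrow> (s', s) \<in> (stepX step X)\<^sup>*}"

definition Mrel :: "('a \<Rightarrow> (('a \<Rightarrow> 'b) \<times> ('a \<Rightarrow> 'b)) set) \<Rightarrow> ('a \<Rightarrow> 'b) set \<Rightarrow> 'a set \<Rightarrow> 'a set \<Rightarrow> bool" where
  "Mrel step S Xi Xj = (\<forall>S'. S' \<subseteq> S \<longrightarrow>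
     (let T = Psi step S Xi (Psi step S (Xi \<union> Xj) S') in stepX step Xj `` T \<subseteq> T))"

end

theory Submission
  imports Defs
begin

text \<open>Call a state X-recurrent if it can return from every state it X-reaches, i.e. it lies in a
  bottom strongly connected component of the X-dynamics; Psi X S' is then the set of X-recurrent
  states X-reachable from S'. All three conditions of the theorem say that every
  (Xi \<union> Xj)-recurrent state reachable from S' is already Xi-recurrent. For the M-relation this
  is seen as follows: T = Psi Xi (Psi (Xi \<union> Xj) S') is closed under Xi-steps, hence under
  (Xi \<union> Xj)-steps. From an (Xi \<union> Xj)-recurrent s, following Xi-steps in the finite state space
  leads to an Xi-recurrent t \<in> T, from which s is reachable again; so s \<in> T.\<close>

definition recurrent :: "('a \<Rightarrow> (('a \<Rightarrow> 'b) \<times> ('a \<Rightarrow> 'b)) set) \<Rightarrow> ('a \<Rightarrow> 'b) set \<Rightarrow> 'a set \<Rightarrow> ('a \<Rightarrow> 'b) \<Rightarrow> bool" where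
  "recurrent step S X s \<longleftrightarrow>
     (\<forall>s'\<in>S. (s, s') \<in> (stepX step X)\<^sup>* \<longrightarrow> (s', s) \<in> (stepX step X)\<^sup>*)"

lemma Psi_eq: "Psi step S X S' = {s \<in> Omega step X S'. recurrent step S X s}"
  unfolding Psi_def recurrent_def by simp

lemma stepX_mono: "X \<subseteq> Y \<Longrightarrow> stepX step X \<subseteq> stepX step Y"
  unfolding stepX_def by auto

lemma stepX_Un: "stepX step (X \<union> Y) = stepX step X \<union> stepX step Y"
  unfolding stepX_def by auto

lemma rtrancl_closed:
  assumes "r `` T \<subseteq> T" and "(s, t) \<in> r\<^sup>*" and "s \<in> T"
  shows "t \<in> T"
  using Image_closed_trancl[OF assms(1)] assms(2,3) by blast

lemma finite_ex_rtrancl_bottom: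
  assumes "finite S" and "s \<in> S"
  shows "\<exists>t. (s, t) \<in> r\<^sup>* \<and> (\<forall>u\<in>S. (t, u) \<in> r\<^sup>* \<longrightarrow> (u, t) \<in> r\<^sup>*)"
  using assms(2)
proof (induction s rule: measure_induct_rule[of "\<lambda>s. card {u\<in>S. (s, u) \<in> r\<^sup>*}"])
  case (less s)
  show ?case
  proof (cases "\<forall>u\<in>S. (s, u) \<in> r\<^sup>* \<longrightarrow> (u, s) \<in> r\<^sup>*")
    case False
    then obtain u where u: "u \<in> S" "(s, u) \<in> r\<^sup>*" "(u, s) \<notin> r\<^sup>*" by blast
    have "{v\<in>S. (u, v) \<in> r\<^sup>*} \<subset> {v\<in>S. (s, v) \<in> r\<^sup>*}"
      using u less.prems by (auto intro: rtrancl_trans)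
    then have "card {v\<in>S. (u, v) \<in> r\<^sup>*} < card {v\<in>S. (s, v) \<in> r\<^sup>*}"
      using assms(1) by (simp add: psubset_card_mono)
    with less.IH u(1) obtain t where "(u, t) \<in> r\<^sup>*" "\<forall>v\<in>S. (t, v) \<in> r\<^sup>* \<longrightarrow> (v, t) \<in> r\<^sup>*"
      by blast
    with u(2) show ?thesis by (meson rtrancl_trans)
  qed blast
qed

lemma Psi_closed: "stepX step X `` Psi step S X S' \<subseteq> Psi step S X S'"
  unfolding Psi_eq recurrent_def Omega_def
  by (auto intro: rtrancl_trans rtrancl_into_rtrancl converse_rtrancl_into_rtrancl)

lemma Psi_Psi_subset:
  assumes "X \<subseteq> Y"
  shows "Psi step S X (Psi step S Y S') \<subseteq> Psi step S Y S'"
proof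
  fix s assume "s \<in> Psi step S X (Psi step S Y S')"
  then obtain p where "p \<in> Psi step S Y S'" "(p, s) \<in> (stepX step Y)\<^sup>*"
    unfolding Psi_eq Omega_def using rtrancl_mono[OF stepX_mono[OF assms]] by blast
  then show "s \<in> Psi step S Y S'"
    using rtrancl_closed[OF Psi_closed] by blast
qed

lemma Psi_subset_Psi_Omega_iff:
  "Psi step S Y S' \<subseteq> Psi step S X (Omega step Y S') \<longleftrightarrow>
     (\<forall>s\<in>Psi step S Y S'. recurrent step S X s)"
  unfolding Psi_eq Omega_def by auto

lemma Psi_eq_Psi_Psi_iff:
  assumes "X \<subseteq> Y"
  shows "Psi step S Y S' = Psi step S X (Psi step S Y S') \<longleftrightarrow>
           (\<forall>s\<in>Psi step S Y S'. recurrent step S X s)"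
  using Psi_Psi_subset[OF assms, of step S S'] unfolding Psi_eq[of _ _ X] Omega_def by auto

lemma Mrel_iff_recurrent:
  assumes "finite S" and in_S: "stepX step (Xi \<union> Xj) \<subseteq> S \<times> S"
  shows "Mrel step S Xi Xj \<longleftrightarrow>
           (\<forall>S'. S' \<subseteq> S \<longrightarrow> (\<forall>s\<in>Psi step S (Xi \<union> Xj) S'. recurrent step S Xi s))"
    (is "_ \<longleftrightarrow> ?recurrent")
proof
  assume ?recurrent
  then have "Psi step S Xi (Psi step S (Xi \<union> Xj) S') = Psi step S (Xi \<union> Xj) S'" if "S' \<subseteq> S" for S'
    using Psi_eq_Psi_Psi_iff[of Xi "Xi \<union> Xj" step S S'] that by auto
  moreover have "stepX step Xj `` Psi step S (Xi \<union> Xj) S' \<subseteq> Psi step S (Xi \<union> Xj) S'" for S'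
    using Psi_closed[of step "Xi \<union> Xj" S S'] stepX_mono[of Xj "Xi \<union> Xj" step] by blast
  ultimately show "Mrel step S Xi Xj"
    unfolding Mrel_def Let_def by simp
next
  assume M: "Mrel step S Xi Xj"
  show ?recurrent
  proof (intro allI impI ballI)
    fix S' s assume "S' \<subseteq> S" and s: "s \<in> Psi step S (Xi \<union> Xj) S'"
    define T where "T = Psi step S Xi (Psi step S (Xi \<union> Xj) S')"
    have "stepX step Xj `` T \<subseteq> T"
      using M \<open>S' \<subseteq> S\<close> unfolding Mrel_def Let_def T_def by simp
    then have closed_Xi_Xj: "stepX step (Xi \<union> Xj) `` T \<subseteq> T"
      using Psi_closed[of step Xi S] unfolding stepX_Un T_def by blast
    have "s \<in> S"
      using s \<open>S' \<subseteq> S\<close> rtrancl_closed[of "stepX step (Xi \<union> Xj)" S] in_S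
      unfolding Psi_eq Omega_def by blast
    then obtain t where st: "(s, t) \<in> (stepX step Xi)\<^sup>*" and t: "recurrent step S Xi t"
      using finite_ex_rtrancl_bottom[OF \<open>finite S\<close>] unfolding recurrent_def by blast
    have st': "(s, t) \<in> (stepX step (Xi \<union> Xj))\<^sup>*"
      using rtrancl_mono[OF stepX_mono[of Xi "Xi \<union> Xj" step]] st by blast
    have "t \<in> T"
      using s st t unfolding T_def Psi_eq Omega_def by blast
    moreover have "(t, s) \<in> (stepX step (Xi \<union> Xj))\<^sup>*"
      using s st' rtrancl_closed[of "stepX step (Xi \<union> Xj)" S] in_S \<open>s \<in> S\<close>
      unfolding Psi_eq recurrent_def by blast
    ultimately have "s \<in> T"
      using rtrancl_closed[OF closed_Xi_Xj] by blast
    then show "recurrent step S Xi s"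
      unfolding T_def Psi_eq by blast
  qed
qed

theorem proposition2:
  fixes A :: "'a set" and Sa :: "'a \<Rightarrow> 'b set" and S :: "('a \<Rightarrow> 'b) set"
    and step :: "'a \<Rightarrow> (('a \<Rightarrow> 'b) \<times> ('a \<Rightarrow> 'b)) set"
    and Xi Xj :: "'a set"
  assumes "finite A"
    and "\<forall>a\<in>A. Sa a \<noteq> {} \<and> finite (Sa a)"
    and "S = PiE A Sa"
    and "\<forall>a\<in>A. step a \<subseteq> S \<times> S"
    and "\<forall>a\<in>A. step a = {} \<or> (\<forall>s\<in>S. \<exists>s'. (s, s') \<in> step a)"
    and "\<forall>a\<in>A. \<forall>s s'. (s, s') \<in> step a \<longrightarrow> s = s' \<or> (\<forall>b. b \<noteq> a \<longrightarrow> s b = s' b)"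
    and "Xi \<subseteq> A" and "Xj \<subseteq> A"
  shows "(Mrel step S Xi Xj \<longleftrightarrow>
            (\<forall>S'. S' \<subseteq> S \<longrightarrow> Psi step S (Xi \<union> Xj) S' \<subseteq> Psi step S Xi (Omega step (Xi \<union> Xj) S')))
       \<and> (Mrel step S Xi Xj \<longleftrightarrow>
            (\<forall>S'. S' \<subseteq> S \<longrightarrow> Psi step S (Xi \<union> Xj) S' = Psi step S Xi (Psi step S (Xi \<union> Xj) S')))"
proof -
  have "finite S"
    using assms(1-3) by (simp add: finite_PiE)
  moreover have "stepX step (Xi \<union> Xj) \<subseteq> S \<times> S"
    using assms(4,7,8) unfolding stepX_def by blast
  ultimately have "Mrel step S Xi Xj \<longleftrightarrow>
      (\<forall>S'. S' \<subseteq> S \<longrightarrow> (\<forall>s\<in>Psi step S (Xi \<union> Xj) S'. recurrent step S Xi s))"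
    by (rule Mrel_iff_recurrent)
  then show ?thesis
    by (simp add: Psi_subset_Psi_Omega_iff Psi_eq_Psi_Psi_iff)
qed

end
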